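(* Let $X$ be a hereditarily meta-Lindelöf, compact, scattered space with countable scattered height. If $X$ has a $P$-base for some directed set $P$ with calibre $(\omega_1,\omega)$, then $X$ is countable, hence metrizable.
   Context: All spaces are Tychonoff. $X$ is hereditarily meta-Lindelöf if every open cover of any subspace has a point-countable open refinement. $X$ is scattered if every nonempty subspace has an isolated point; for $A\subseteq X$ let $A'$ be the set of non-isolated points of $A$, set $X^{(0)}=X$, $X^{(\alpha)}=\bigcap_{\beta<\alpha}(X^{(\beta)})'$ for $\alpha>0$; for $x\in X$, $h(x)$ is the ordinal with $x\in X^{(h(x))}\setminus X^{(h(x)+1)}$, and the scattered height is $h(X)=\sup\{h(x):x\in X\}$. A $P$-base is an assignment to each $x\in X$ of a neighborhood base $\{U_p:p\in P\}$ at $x$ with $U_p\subseteq U_{p'}$ whenever $p\ge p'$. A directed set has calibre $(\omega_1,\omega)$ if every uncountable subset contains an infinite subset with an upper bound. *)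

theory Defs
  imports "HOL-Analysis.Analysis"
begin

definition tychonoff_space :: "'a topology \<Rightarrow> bool" where
  "tychonoff_space X \<longleftrightarrow> completely_regular_space X \<and> Hausdorff_space X"

definition hereditarily_meta_lindelof :: "'a topology \<Rightarrow> bool" where
  "hereditarily_meta_lindelof X \<longleftrightarrow>
     (\<forall>Y \<U>. Y \<subseteq> topspace X \<and> (\<forall>U\<in>\<U>. openin (subtopology X Y) U) \<and> \<Union>\<U> = Y \<longrightarrow>
        (\<exists>\<V>. (\<forall>V\<in>\<V>. openin (subtopology X Y) V) \<and> \<Union>\<V> = Y \<and>
              (\<forall>V\<in>\<V>. \<exists>U\<in>\<U>. V \<subseteq> U) \<and>
              (\<forall>y\<in>Y. countable {V\<in>\<V>. y \<in> V})))"

definition scattered_space :: "'a topology \<Rightarrow> bool" where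
  "scattered_space X \<longleftrightarrow>
     (\<forall>A. A \<subseteq> topspace X \<and> A \<noteq> {} \<longrightarrow> (\<exists>x\<in>A. \<exists>U. openin X U \<and> U \<inter> A = {x}))"

definition nonisolated_points :: "'a topology \<Rightarrow> 'a set \<Rightarrow> 'a set" where
  "nonisolated_points X A = A \<inter> (X derived_set_of A)"

text \<open>D is the transfinite sequence of Cantor--Bendixson derivatives X^(alpha), indexed by
  the (well-ordered) field of the well-order r:
  X^(alpha) = X \<inter> (\<Inter>{beta < alpha} (X^(beta))'), so that X^(0) = X.\<close>
definition CB_derivatives :: "'a topology \<Rightarrow> 'i rel \<Rightarrow> ('i \<Rightarrow> 'a set) \<Rightarrow> bool" where
  "CB_derivatives X r D \<longleftrightarrow>
     (\<forall>\<alpha>\<in>Field r. D \<alpha> = topspace X \<inter> (\<Inter>\<beta>\<in>underS r \<alpha>. nonisolated_points X (D \<beta>)))"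

text \<open>Countable scattered height: h(X) is a countable ordinal, i.e. X^(alpha) = {} for some
  countable ordinal alpha (every countable ordinal is represented by a well-order on a
  subset of nat).\<close>
definition countable_scattered_height :: "'a topology \<Rightarrow> bool" where
  "countable_scattered_height X \<longleftrightarrow>
     (\<exists>(r :: nat rel) D. Well_order r \<and> CB_derivatives X r D \<and> (\<exists>\<alpha>\<in>Field r. D \<alpha> = {}))"

definition directed_set :: "'p set \<Rightarrow> ('p \<Rightarrow> 'p \<Rightarrow> bool) \<Rightarrow> bool" where
  "directed_set P le \<longleftrightarrow>
     (\<forall>p\<in>P. le p p) \<and>
     (\<forall>p\<in>P. \<forall>q\<in>P. \<forall>s\<in>P. le p q \<and> le q s \<longrightarrow> le p s) \<and>
     (\<forall>p\<in>P. \<forall>q\<in>P. \<exists>s\<in>P. le p s \<and> le q s)"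

definition calibre_omega1_omega :: "'p set \<Rightarrow> ('p \<Rightarrow> 'p \<Rightarrow> bool) \<Rightarrow> bool" where
  "calibre_omega1_omega P le \<longleftrightarrow>
     (\<forall>A. A \<subseteq> P \<and> uncountable A \<longrightarrow>
        (\<exists>B\<subseteq>A. infinite B \<and> (\<exists>u\<in>P. \<forall>b\<in>B. le b u)))"

definition nbhd :: "'a topology \<Rightarrow> 'a \<Rightarrow> 'a set \<Rightarrow> bool" where
  "nbhd X x N \<longleftrightarrow> (\<exists>W. openin X W \<and> x \<in> W \<and> W \<subseteq> N)"

definition P_base :: "'a topology \<Rightarrow> 'p set \<Rightarrow> ('p \<Rightarrow> 'p \<Rightarrow> bool) \<Rightarrow> ('a \<Rightarrow> 'p \<Rightarrow> 'a set) \<Rightarrow> bool" where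
  "P_base X P le U \<longleftrightarrow>
     (\<forall>x\<in>topspace X.
        (\<forall>p\<in>P. U x p \<subseteq> topspace X \<and> nbhd X x (U x p)) \<and>
        (\<forall>W. openin X W \<and> x \<in> W \<longrightarrow> (\<exists>p\<in>P. U x p \<subseteq> W)) \<and>
        (\<forall>p\<in>P. \<forall>p'\<in>P. le p' p \<longrightarrow> U x p \<subseteq> U x p'))"

end

theory Submission
  imports Defs
begin

(* If X were uncountable, compactness would give it a condensation point, and since X is
  scattered some condensation point z is isolated among all of them.  A neighbourhood of z then
  contains an uncountable set T that is locally countable away from z.  Applying the
  meta-Lindelof property to X - {z} gives a point-countable open cover whose members meet T in
  countable sets; a maximal subset of T meeting every member at most once is uncountable, so it
  can accumulate only at z.  The calibre of P thins it to an infinite set that misses a single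
  basic neighbourhood U z u, so this set has no accumulation point at all, contradicting
  compactness.  A countable compact Tychonoff space embeds in a countable power of the reals,
  so it is metrizable. *)

lemma uncountable_independent_subset:
  assumes "uncountable T"
    and sym: "\<And>a b. R a b \<Longrightarrow> R b a"
    and countable_nbhd: "\<And>t. t \<in> T \<Longrightarrow> countable {s \<in> T. R t s}"
  shows "\<exists>S\<subseteq>T. uncountable S \<and> pairwise (\<lambda>a b. \<not> R a b) S"
proof -
  define \<A> where "\<A> = {S. S \<subseteq> T \<and> pairwise (\<lambda>a b. \<not> R a b) S}"
  have "\<forall>\<C>\<in>chains \<A>. \<Union>\<C> \<in> \<A>"
    unfolding \<A>_def chains_def by (auto intro: pairwise_chain_Union)
  then obtain S where "S \<in> \<A>" and maximal: "\<And>S'. S' \<in> \<A> \<Longrightarrow> S \<subseteq> S' \<Longrightarrow> S' = S"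
    using Zorn_Lemma by force
  then have ST: "S \<subseteq> T" and indep: "pairwise (\<lambda>a b. \<not> R a b) S"
    by (auto simp: \<A>_def)
  have "uncountable S"
  proof
    assume "countable S"
    then have "countable (S \<union> (\<Union>s\<in>S. {t \<in> T. R s t}))"
      using ST countable_nbhd by blast
    then obtain t where "t \<in> T - (S \<union> (\<Union>s\<in>S. {t \<in> T. R s t}))"
      using \<open>uncountable T\<close> uncountable_minus_countable by (metis ex_in_conv countable_empty)
    then have t: "t \<in> T" "t \<notin> S" "\<And>s. s \<in> S \<Longrightarrow> \<not> R s t"
      by auto
    have "insert t S \<in> \<A>"
      using ST indep t sym by (auto simp: \<A>_def pairwise_insert)
    then show False
      using maximal t(2) by blast
  qed
  then show ?thesis
    using ST indep by blast
qed

lemma point_countable_family_separated_subset: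
  assumes "uncountable T"
    and countable_traces: "\<And>V. V \<in> \<V> \<Longrightarrow> countable (V \<inter> T)"
    and point_countable: "\<And>t. t \<in> T \<Longrightarrow> countable {V \<in> \<V>. t \<in> V}"
  shows "\<exists>S\<subseteq>T. uncountable S \<and> (\<forall>V\<in>\<V>. \<exists>a. V \<inter> S \<subseteq> {a})"
proof -
  define R where "R a b \<longleftrightarrow> (\<exists>V\<in>\<V>. a \<in> V \<and> b \<in> V)" for a b
  have sym: "R a b \<Longrightarrow> R b a" for a b
    by (auto simp: R_def)
  have countable_nbhd: "countable {s \<in> T. R t s}" if "t \<in> T" for t
  proof -
    have "countable (\<Union>V\<in>{V \<in> \<V>. t \<in> V}. V \<inter> T)"
      using that countable_traces point_countable by (intro countable_UN) auto
    moreover have "{s \<in> T. R t s} = (\<Union>V\<in>{V \<in> \<V>. t \<in> V}. V \<inter> T)"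
      by (auto simp: R_def)
    ultimately show ?thesis
      by simp
  qed
  then obtain S where "S \<subseteq> T" "uncountable S" "pairwise (\<lambda>a b. \<not> R a b) S"
    using uncountable_independent_subset[of T R] \<open>uncountable T\<close> sym countable_nbhd by blast
  moreover have "\<exists>a. V \<inter> S \<subseteq> {a}" if "V \<in> \<V>" and "pairwise (\<lambda>a b. \<not> R a b) S" for V
    using that unfolding pairwise_def R_def by blast
  ultimately show ?thesis
    by blast
qed

lemma hereditarily_meta_lindelofD:
  assumes "hereditarily_meta_lindelof X" and "Y \<subseteq> topspace X"
    and "\<And>A. A \<in> \<U> \<Longrightarrow> openin (subtopology X Y) A" and "\<Union>\<U> = Y"
  obtains \<V> where "\<And>V. V \<in> \<V> \<Longrightarrow> openin (subtopology X Y) V" and "\<Union>\<V> = Y"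
    and "\<And>V. V \<in> \<V> \<Longrightarrow> \<exists>A\<in>\<U>. V \<subseteq> A" and "\<And>y. y \<in> Y \<Longrightarrow> countable {V\<in>\<V>. y \<in> V}"
proof -
  have "Y \<subseteq> topspace X \<and> (\<forall>A\<in>\<U>. openin (subtopology X Y) A) \<and> \<Union>\<U> = Y"
    using assms(2-4) by blast
  then have "\<exists>\<V>. (\<forall>V\<in>\<V>. openin (subtopology X Y) V) \<and> \<Union>\<V> = Y \<and>
      (\<forall>V\<in>\<V>. \<exists>A\<in>\<U>. V \<subseteq> A) \<and> (\<forall>y\<in>Y. countable {V\<in>\<V>. y \<in> V})"
    by (rule assms(1)[unfolded hereditarily_meta_lindelof_def, rule_format])
  then obtain \<V> where "\<forall>V\<in>\<V>. openin (subtopology X Y) V" "\<Union>\<V> = Y"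
    "\<forall>V\<in>\<V>. \<exists>A\<in>\<U>. V \<subseteq> A" "\<forall>y\<in>Y. countable {V\<in>\<V>. y \<in> V}"
    by blast
  then show ?thesis
    by (intro that) auto
qed

lemma hereditarily_meta_lindelof_uncountable_discrete_subset:
  assumes hml: "hereditarily_meta_lindelof X" and "t1_space X"
    and Y: "openin X Y" and "T \<subseteq> Y" and "uncountable T"
    and locally_countable: "\<And>y. y \<in> Y \<Longrightarrow> \<exists>G. openin X G \<and> y \<in> G \<and> countable (G \<inter> T)"
  shows "\<exists>S\<subseteq>T. uncountable S \<and> Y \<inter> X derived_set_of S = {}"
proof -
  define \<G> where "\<G> = {G. openin X G \<and> countable (G \<inter> T)}"
  define \<U> where "\<U> = (\<lambda>G. G \<inter> Y) ` \<G>"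
  have "openin (subtopology X Y) A" if "A \<in> \<U>" for A
    using that openin_subtopology_Int unfolding \<U>_def \<G>_def by blast
  moreover have "\<Union>\<U> = Y"
  proof
    show "\<Union>\<U> \<subseteq> Y"
      unfolding \<U>_def by blast
    show "Y \<subseteq> \<Union>\<U>"
    proof
      fix y
      assume "y \<in> Y"
      then obtain G where "G \<in> \<G>" "y \<in> G"
        using locally_countable unfolding \<G>_def by blast
      then show "y \<in> \<Union>\<U>"
        unfolding \<U>_def using \<open>y \<in> Y\<close> by blast
    qed
  qed
  ultimately obtain \<V> where V_open: "\<And>V. V \<in> \<V> \<Longrightarrow> openin (subtopology X Y) V"
    and "\<Union>\<V> = Y" and V_refines: "\<And>V. V \<in> \<V> \<Longrightarrow> \<exists>A\<in>\<U>. V \<subseteq> A"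
    and V_point_countable: "\<And>y. y \<in> Y \<Longrightarrow> countable {V\<in>\<V>. y \<in> V}"
    using hereditarily_meta_lindelofD[OF hml openin_subset[OF Y]] by blast
  have countable_traces: "countable (V \<inter> T)" if V: "V \<in> \<V>" for V
  proof -
    obtain G where "G \<in> \<G>" "V \<subseteq> G \<inter> Y"
      using V_refines[OF V] unfolding \<U>_def by blast
    then have "V \<inter> T \<subseteq> G \<inter> T" "countable (G \<inter> T)"
      unfolding \<G>_def by blast+
    then show ?thesis
      by (rule countable_subset)
  qed
  have point_countable: "countable {V\<in>\<V>. t \<in> V}" if "t \<in> T" for t
    using V_point_countable that \<open>T \<subseteq> Y\<close> by blast
  obtain S where "S \<subseteq> T" "uncountable S" and separated: "\<forall>V\<in>\<V>. \<exists>a. V \<inter> S \<subseteq> {a}"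
    using point_countable_family_separated_subset[OF \<open>uncountable T\<close> countable_traces point_countable]
    by blast
  have "y \<notin> X derived_set_of S" if "y \<in> Y" for y
  proof -
    obtain V where V: "V \<in> \<V>" "y \<in> V"
      using \<open>\<Union>\<V> = Y\<close> \<open>y \<in> Y\<close> by blast
    then obtain a where "S \<inter> V \<subseteq> {a}"
      using separated by blast
    then have "finite (S \<inter> V)"
      using finite_subset by blast
    moreover have "openin X V"
      using openin_trans_full[OF V_open[OF V(1)] Y] .
    ultimately have "\<exists>U. y \<in> U \<and> openin X U \<and> finite (S \<inter> U)"
      using V(2) by blast
    then show ?thesis
      by (simp add: t1_space_derived_set_of_infinite_openin[THEN iffD1, OF \<open>t1_space X\<close>])
  qed
  then have "Y \<inter> X derived_set_of S = {}"
    by blast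
  then show ?thesis
    using \<open>S \<subseteq> T\<close> \<open>uncountable S\<close> by blast
qed

lemma calibre_omega1_omega_infinite_bounded_subset:
  assumes calibre: "calibre_omega1_omega P le" and refl: "\<And>p. p \<in> P \<Longrightarrow> le p p"
    and "f ` S \<subseteq> P" and "uncountable S"
  shows "\<exists>S'\<subseteq>S. infinite S' \<and> (\<exists>u\<in>P. \<forall>s\<in>S'. le (f s) u)"
proof (cases "countable (f ` S)")
  case True
  have "S = (\<Union>p\<in>f ` S. {s \<in> S. f s = p})"
    by auto
  then obtain p where p: "p \<in> f ` S" "uncountable {s \<in> S. f s = p}"
    using True \<open>uncountable S\<close> by (metis (no_types, lifting) countable_UN)
  then show ?thesis
    using \<open>f ` S \<subseteq> P\<close> refl uncountable_infinite
    by (intro exI[of _ "{s \<in> S. f s = p}"]) auto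
next
  case False
  then have "\<exists>B\<subseteq>f ` S. infinite B \<and> (\<exists>u\<in>P. \<forall>b\<in>B. le b u)"
    using calibre \<open>f ` S \<subseteq> P\<close> unfolding calibre_omega1_omega_def by blast
  then obtain B u where B: "B \<subseteq> f ` S" "infinite B" "u \<in> P" "\<forall>b\<in>B. le b u"
    by blast
  have "B = f ` {s \<in> S. f s \<in> B}"
    using B(1) by auto
  then have "infinite {s \<in> S. f s \<in> B}"
    using B(2) by (metis finite_imageI)
  then show ?thesis
    using B(3,4) by (intro exI[of _ "{s \<in> S. f s \<in> B}"]) auto
qed

lemma P_baseD:
  assumes "P_base X P le U" and "x \<in> topspace X"
  shows P_base_nbhd: "\<And>p. p \<in> P \<Longrightarrow> nbhd X x (U x p)"
    and P_base_basis: "\<And>W. openin X W \<Longrightarrow> x \<in> W \<Longrightarrow> \<exists>p\<in>P. U x p \<subseteq> W"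
    and P_base_antimono: "\<And>p p'. p \<in> P \<Longrightarrow> p' \<in> P \<Longrightarrow> le p' p \<Longrightarrow> U x p \<subseteq> U x p'"
  using assms unfolding P_base_def by blast+

lemma P_base_calibre_infinite_subset_not_accumulating:
  assumes base: "P_base X P le U" and calibre: "calibre_omega1_omega P le"
    and refl: "\<And>p. p \<in> P \<Longrightarrow> le p p" and "t1_space X"
    and z: "z \<in> topspace X" and S: "S \<subseteq> topspace X - {z}" and "uncountable S"
  shows "\<exists>S'\<subseteq>S. infinite S' \<and> z \<notin> X derived_set_of S'"
proof -
  have "\<exists>p\<in>P. U z p \<subseteq> topspace X - {s}" if "s \<in> S" for s
  proof -
    have "openin X (topspace X - {s})"
      using t1_space_openin_delete_alt[THEN iffD1, OF \<open>t1_space X\<close>] by blast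
    moreover have "z \<in> topspace X - {s}"
      using z S that by blast
    ultimately show ?thesis
      by (rule P_base_basis[OF base z])
  qed
  then have "\<forall>s\<in>S. \<exists>p. p \<in> P \<and> s \<notin> U z p"
    by blast
  then obtain f where f: "\<forall>s\<in>S. f s \<in> P \<and> s \<notin> U z (f s)"
    using bchoice[of S "\<lambda>s p. p \<in> P \<and> s \<notin> U z p"] by blast
  then have "f ` S \<subseteq> P"
    by blast
  from calibre_omega1_omega_infinite_bounded_subset[OF calibre refl this \<open>uncountable S\<close>]
  obtain S' u where "S' \<subseteq> S" "infinite S'" "u \<in> P" and bound: "\<forall>s\<in>S'. le (f s) u"
    by blast
  have "s \<notin> U z u" if "s \<in> S'" for s
  proof -
    have "s \<in> S"
      using \<open>S' \<subseteq> S\<close> that by blast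
    then have "U z u \<subseteq> U z (f s)"
      using P_base_antimono[OF base z \<open>u \<in> P\<close>] f bound that by blast
    then show ?thesis
      using f \<open>s \<in> S\<close> by blast
  qed
  moreover obtain G where "openin X G" "z \<in> G" "G \<subseteq> U z u"
    using P_base_nbhd[OF base z \<open>u \<in> P\<close>] unfolding nbhd_def by blast
  ultimately have "S' \<inter> G = {}"
    by blast
  then have "z \<notin> X derived_set_of S'"
    using \<open>openin X G\<close> \<open>z \<in> G\<close> unfolding in_derived_set_of by blast
  then show ?thesis
    using \<open>S' \<subseteq> S\<close> \<open>infinite S'\<close> by blast
qed

definition condensation_points :: "'a topology \<Rightarrow> 'a set" where
  "condensation_points X = {x \<in> topspace X. \<forall>G. openin X G \<and> x \<in> G \<longrightarrow> uncountable G}"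

lemma countable_compactin_disjoint_condensation_points:
  assumes K: "compactin X K" and "K \<inter> condensation_points X = {}"
  shows "countable K"
proof -
  define \<U> where "\<U> = {G. openin X G \<and> countable G}"
  have "K \<subseteq> \<Union>\<U>"
  proof
    fix x
    assume "x \<in> K"
    then have "x \<in> topspace X" "x \<notin> condensation_points X"
      using compactin_subset_topspace[OF K] assms(2) by blast+
    then obtain G where "openin X G" "x \<in> G" "countable G"
      unfolding condensation_points_def by blast
    then show "x \<in> \<Union>\<U>"
      unfolding \<U>_def by blast
  qed
  moreover have "\<forall>G\<in>\<U>. openin X G"
    unfolding \<U>_def by blast
  ultimately obtain \<F> where "finite \<F>" "\<F> \<subseteq> \<U>" "K \<subseteq> \<Union>\<F>"
    using compactin_def[THEN iffD1, OF K] by meson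
  moreover have "countable (\<Union>G\<in>\<F>. G)"
  proof (rule countable_UN)
    show "countable \<F>"
      using \<open>finite \<F>\<close> by (rule countable_finite)
    show "countable G" if "G \<in> \<F>" for G
      using that \<open>\<F> \<subseteq> \<U>\<close> unfolding \<U>_def by blast
  qed
  ultimately show ?thesis
    using countable_subset by auto
qed

lemma uncountable_scattered_compact_space_condensing_set:
  assumes "regular_space X" and "compact_space X" and "scattered_space X"
    and "uncountable (topspace X)"
  obtains z T where "z \<in> topspace X" and "T \<subseteq> topspace X - {z}" and "uncountable T"
    and "\<And>y. y \<in> topspace X - {z} \<Longrightarrow> \<exists>G. openin X G \<and> y \<in> G \<and> countable (G \<inter> T)"
proof -
  let ?C = "condensation_points X"
  have "?C \<noteq> {}"
    using countable_compactin_disjoint_condensation_points[of X "topspace X"] assms(2,4)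
    unfolding compact_space_def by blast
  moreover have "?C \<subseteq> topspace X"
    unfolding condensation_points_def by blast
  ultimately obtain z W where "z \<in> ?C" "openin X W" "W \<inter> ?C = {z}"
    using \<open>scattered_space X\<close> unfolding scattered_space_def by blast
  then have z: "z \<in> topspace X" "z \<in> W"
    using \<open>?C \<subseteq> topspace X\<close> by blast+
  have "neighbourhood_base_of (closedin X) X"
    using \<open>regular_space X\<close> by (simp add: neighbourhood_base_of_closedin)
  then have "\<exists>U V. openin X U \<and> closedin X V \<and> z \<in> U \<and> U \<subseteq> V \<and> V \<subseteq> W"
    using \<open>openin X W\<close> \<open>z \<in> W\<close> unfolding neighbourhood_base_of by simp
  then obtain U V where "openin X U" "closedin X V" "z \<in> U" "U \<subseteq> V" "V \<subseteq> W"
    by blast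
  define T where "T = U - {z}"
  have "uncountable U"
    using \<open>z \<in> ?C\<close> \<open>openin X U\<close> \<open>z \<in> U\<close> unfolding condensation_points_def by blast
  then have "uncountable T"
    unfolding T_def by simp
  moreover have "T \<subseteq> topspace X - {z}"
    using openin_subset[OF \<open>openin X U\<close>] unfolding T_def by blast
  moreover have "\<exists>G. openin X G \<and> y \<in> G \<and> countable (G \<inter> T)" if y: "y \<in> topspace X - {z}" for y
  proof (cases "y \<in> V")
    case True
    then have "y \<notin> ?C"
      using \<open>V \<subseteq> W\<close> \<open>W \<inter> ?C = {z}\<close> y by blast
    then obtain G where "openin X G" "y \<in> G" "countable G"
      using y unfolding condensation_points_def by blast
    moreover have "countable (G \<inter> T)"
      using \<open>countable G\<close> countable_subset[of "G \<inter> T" G] by blast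
    ultimately show ?thesis
      by blast
  next
    case False
    have "openin X (topspace X - V)" "(topspace X - V) \<inter> T = {}"
      using \<open>closedin X V\<close> \<open>U \<subseteq> V\<close> unfolding T_def by blast+
    then show ?thesis
      using False y by (intro exI[of _ "topspace X - V"]) simp
  qed
  ultimately show ?thesis
    using that z(1) by blast
qed

lemma hereditarily_meta_lindelof_scattered_compact_imp_countable:
  assumes "Hausdorff_space X" and hml: "hereditarily_meta_lindelof X"
    and "compact_space X" and "scattered_space X"
    and calibre: "calibre_omega1_omega P le" and refl: "\<And>p. p \<in> P \<Longrightarrow> le p p"
    and base: "P_base X P le U"
  shows "countable (topspace X)"
proof (rule ccontr)
  assume "uncountable (topspace X)"
  have t1: "t1_space X"
    using \<open>Hausdorff_space X\<close> by (rule Hausdorff_imp_t1_space)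
  have "regular_space X"
    using \<open>compact_space X\<close> \<open>Hausdorff_space X\<close> by (rule compact_Hausdorff_imp_regular_space)
  then obtain z T where z: "z \<in> topspace X" and T: "T \<subseteq> topspace X - {z}" "uncountable T"
    and locally_countable:
      "\<And>y. y \<in> topspace X - {z} \<Longrightarrow> \<exists>G. openin X G \<and> y \<in> G \<and> countable (G \<inter> T)"
    using uncountable_scattered_compact_space_condensing_set[OF _ \<open>compact_space X\<close>
      \<open>scattered_space X\<close> \<open>uncountable (topspace X)\<close>] by blast
  have "openin X (topspace X - {z})"
    using t1_space_openin_delete_alt[THEN iffD1, OF t1] by blast
  from hereditarily_meta_lindelof_uncountable_discrete_subset[OF hml t1 this T(1,2) locally_countable]
  obtain S where S: "S \<subseteq> T" "uncountable S" "(topspace X - {z}) \<inter> X derived_set_of S = {}"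
    by blast
  have "S \<subseteq> topspace X - {z}"
    using S(1) T(1) by blast
  from P_base_calibre_infinite_subset_not_accumulating[OF base calibre refl t1 z this S(2)]
  obtain S' where "S' \<subseteq> S" "infinite S'" "z \<notin> X derived_set_of S'"
    by blast
  have "X derived_set_of S' \<subseteq> X derived_set_of S"
    using \<open>S' \<subseteq> S\<close> by (rule derived_set_of_mono)
  then have "X derived_set_of S' = {}"
    using S(3) \<open>z \<notin> X derived_set_of S'\<close> derived_set_of_subset_topspace[of X S'] by blast
  moreover have "X derived_set_of S' \<noteq> {}"
    using compact_space_imp_Bolzano_Weierstrass \<open>compact_space X\<close> \<open>infinite S'\<close> \<open>S' \<subseteq> S\<close>
      \<open>S \<subseteq> topspace X - {z}\<close> by blast
  ultimately show False
    by blast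
qed

lemma completely_regular_Hausdorff_separating_function:
  assumes "completely_regular_space X" and "Hausdorff_space X"
    and "a \<in> topspace X" and "b \<in> topspace X" and "a \<noteq> b"
  obtains f where "continuous_map X euclideanreal f" and "f a \<noteq> f b"
proof -
  have "closedin X {b}"
    using closedin_Hausdorff_singleton[OF \<open>Hausdorff_space X\<close> \<open>b \<in> topspace X\<close>] .
  moreover have "a \<in> topspace X - {b}"
    using assms(3,5) by blast
  ultimately obtain f :: "'a \<Rightarrow> real"
    where f: "continuous_map X (top_of_set {0..1}) f" "f a = 0" "f ` {b} \<subseteq> {1}"
    using \<open>completely_regular_space X\<close> unfolding completely_regular_space_def by blast
  have "continuous_map X euclideanreal f"
    using f(1) continuous_map_in_subtopology by blast
  moreover have "f a \<noteq> f b"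
    using f(2,3) by simp
  ultimately show ?thesis
    by (rule that)
qed

lemma countable_compact_completely_regular_imp_metrizable:
  assumes "completely_regular_space X" and "Hausdorff_space X" and "compact_space X"
    and "countable (topspace X)"
  shows "metrizable_space X"
proof -
  define I where "I = {(a, b). a \<in> topspace X \<and> b \<in> topspace X \<and> a \<noteq> b}"
  have "\<exists>f. continuous_map X euclideanreal f \<and> f (fst i) \<noteq> f (snd i)" if i: "i \<in> I" for i
  proof -
    obtain a b where ab: "i = (a, b)" "a \<in> topspace X" "b \<in> topspace X" "a \<noteq> b"
      using i unfolding I_def by blast
    then obtain f where "continuous_map X euclideanreal f" "f a \<noteq> f b"
      using completely_regular_Hausdorff_separating_function[OF assms(1,2)] by metis
    then show ?thesis
      using ab(1) by auto
  qed
  then have "\<forall>i\<in>I. \<exists>f. continuous_map X euclideanreal f \<and> f (fst i) \<noteq> f (snd i)"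
    by blast
  then obtain g where g: "\<forall>i\<in>I. continuous_map X euclideanreal (g i) \<and> g i (fst i) \<noteq> g i (snd i)"
    using bchoice[of I "\<lambda>i f. continuous_map X euclideanreal f \<and> f (fst i) \<noteq> f (snd i)"] by blast
  define e where "e x = (\<lambda>i\<in>I. g i x)" for x
  let ?R = "product_topology (\<lambda>_. euclideanreal) I"
  have "continuous_map X ?R e"
    unfolding e_def continuous_map_componentwise using g by auto
  moreover have "inj_on e (topspace X)"
  proof (rule inj_onI)
    fix a b
    assume "a \<in> topspace X" "b \<in> topspace X" "e a = e b"
    show "a = b"
    proof (rule ccontr)
      assume "a \<noteq> b"
      then have "(a, b) \<in> I"
        using \<open>a \<in> topspace X\<close> \<open>b \<in> topspace X\<close> unfolding I_def by blast
      then have "e a (a, b) \<noteq> e b (a, b)"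
        using g unfolding e_def by fastforce
      then show False
        using \<open>e a = e b\<close> by simp
    qed
  qed
  moreover have "Hausdorff_space ?R"
    by (simp add: Hausdorff_space_product_topology)
  ultimately have "embedding_map X ?R e"
    using continuous_imp_embedding_map \<open>compact_space X\<close> by blast
  moreover have "metrizable_space ?R"
  proof (rule metrizable_topology_D)
    show "topspace ?R \<noteq> {}"
      by (simp add: PiE_eq_empty_iff)
    have "I \<subseteq> topspace X \<times> topspace X"
      unfolding I_def by blast
    then show "countable {i \<in> I. \<nexists>a. topspace euclideanreal \<subseteq> {a}}"
      using countable_subset[of _ "topspace X \<times> topspace X"] \<open>countable (topspace X)\<close> by auto
    show "metrizable_space euclideanreal" for i
      by (rule metrizable_space_euclidean)
  qed
  then have "metrizable_space (subtopology ?R (e ` topspace X))"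
    by (rule metrizable_space_subtopology)
  ultimately show ?thesis
    using embedding_map_imp_homeomorphic_space homeomorphic_metrizable_space by blast
qed

theorem mainTheorem13:
  fixes X :: "'a topology" and P :: "'p set" and le :: "'p \<Rightarrow> 'p \<Rightarrow> bool"
    and U :: "'a \<Rightarrow> 'p \<Rightarrow> 'a set"
  assumes "tychonoff_space X"
    and "hereditarily_meta_lindelof X"
    and "compact_space X"
    and "scattered_space X"
    and "countable_scattered_height X"
    and "directed_set P le"
    and "calibre_omega1_omega P le"
    and "P_base X P le U"
  shows "countable (topspace X) \<and> metrizable_space X"
proof -
  have Hausdorff: "Hausdorff_space X" and completely_regular: "completely_regular_space X"
    using assms(1) unfolding tychonoff_space_def by blast+
  have "\<And>p. p \<in> P \<Longrightarrow> le p p"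
    using assms(6) unfolding directed_set_def by blast
  from hereditarily_meta_lindelof_scattered_compact_imp_countable[OF Hausdorff assms(2,3,4,7) this
      assms(8)]
  have "countable (topspace X)" .
  then show ?thesis
    using countable_compact_completely_regular_imp_metrizable[OF completely_regular Hausdorff assms(3)]
    by blast
qed

end
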